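(* Let $K=2$ and consider the loss sequence $\ell_{t,1}=0$, $\ell_{t,2}=1$ for all $1\le t\le T$. For WSU-UX run with any valid $(\eta,\gamma)$ with $\eta<T^{-2/3}$, the regret satisfies $\mathbb{E}[\mathcal R_T]\ge \frac{1}{200}T^{2/3}$.
   Context: WSU-UX. Fix integers $K\ge 2$ (number of arms/experts) and $T\ge 1$ (horizon) and hyperparameters $\eta,\gamma$. The pair $(\eta,\gamma)$ is called valid if $\eta,\gamma\in(0,1/2)$ and $\eta K/\gamma\le 1/2$. Given a fixed (oblivious) loss sequence $\ell_t=(\ell_{t,1},\dots,\ell_{t,K})\in[0,1]^K$, $t=1,\dots,T$, WSU-UX sets $\pi_{1,i}=1/K$ for all $i$ and in each round $t$: forms $\tilde\pi_{t,i}=(1-\gamma)\pi_{t,i}+\gamma/K$; draws $I_t\in[K]$ with $\Pr(I_t=i\mid\mathcal F_{t-1})=\tilde\pi_{t,i}$; sets $\hat\ell_{t,i}=\ell_{t,i}\mathbf 1[I_t=i]/\tilde\pi_{t,i}$; and updates $\pi_{t+1,i}=\pi_{t,i}\bigl(1-\eta(\hat\ell_{t,i}-\sum_{j=1}^K\pi_{t,j}\hat\ell_{t,j})\bigr)$. Here $\mathcal F_t$ is the history (sigma-algebra generated by $I_1,\dots,I_t$). The regret is $\mathbb{E}[\mathcal R_T]=\mathbb{E}\bigl[\sum_{t=1}^T\sum_{j=1}^K\tilde\pi_{t,j}\ell_{t,j}\bigr]-\min_{i\in[K]}\sum_{t=1}^T\ell_{t,i}$. *)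

theory Defs
  imports "HOL-Analysis.Analysis" "HOL-Library.FuncSet"
begin

text \<open>Arms are indexed by 1..K, rounds by 1..T. A realised history of draws is a
function I with I t the arm drawn in round t. Losses: l t i.\<close>

definition wsu_valid :: "nat \<Rightarrow> real \<Rightarrow> real \<Rightarrow> bool" where
  "wsu_valid K eta gamma \<longleftrightarrow> 0 < eta \<and> eta < 1/2 \<and> 0 < gamma \<and> gamma < 1/2
     \<and> eta * real K / gamma \<le> 1/2"

definition wsu_mix :: "nat \<Rightarrow> real \<Rightarrow> (nat \<Rightarrow> real) \<Rightarrow> nat \<Rightarrow> real" where
  "wsu_mix K gamma p i = (1 - gamma) * p i + gamma / real K"

text \<open>wsu_pi K eta gamma l I n is the weight vector pi_(n+1) after rounds 1..n
with draws I 1, ..., I n.\<close>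
fun wsu_pi :: "nat \<Rightarrow> real \<Rightarrow> real \<Rightarrow> (nat \<Rightarrow> nat \<Rightarrow> real) \<Rightarrow> (nat \<Rightarrow> nat)
                \<Rightarrow> nat \<Rightarrow> nat \<Rightarrow> real" where
  "wsu_pi K eta gamma l I 0 = (\<lambda>i. 1 / real K)"
| "wsu_pi K eta gamma l I (Suc n) =
     (let p = wsu_pi K eta gamma l I n;
          pt = wsu_mix K gamma p;
          t = Suc n;
          lhat = (\<lambda>i. l t i * (if I t = i then 1 else 0) / pt i);
          avg = (\<Sum>j\<in>{1..K}. p j * lhat j)
      in (\<lambda>i. p i * (1 - eta * (lhat i - avg))))"

definition wsu_hist_prob :: "nat \<Rightarrow> real \<Rightarrow> real \<Rightarrow> (nat \<Rightarrow> nat \<Rightarrow> real) \<Rightarrow> nat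
                \<Rightarrow> (nat \<Rightarrow> nat) \<Rightarrow> real" where
  "wsu_hist_prob K eta gamma l T I =
     (\<Prod>t\<in>{1..T}. wsu_mix K gamma (wsu_pi K eta gamma l I (t - 1)) (I t))"

definition wsu_expected_regret :: "nat \<Rightarrow> nat \<Rightarrow> real \<Rightarrow> real \<Rightarrow> (nat \<Rightarrow> nat \<Rightarrow> real) \<Rightarrow> real" where
  "wsu_expected_regret K T eta gamma l =
     (\<Sum>I\<in>PiE {1..T} (\<lambda>_. {1..K}).
        wsu_hist_prob K eta gamma l T I *
        (\<Sum>t\<in>{1..T}. \<Sum>j\<in>{1..K}. wsu_mix K gamma (wsu_pi K eta gamma l I (t - 1)) j * l t j))
     - Min ((\<lambda>i. \<Sum>t\<in>{1..T}. l t i) ` {1..K})"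

end

theory Submission
  imports Defs
begin

text \<open>With losses (0, 1) the weight q of the second (bad) arm is updated as
  \<open>q' = q (1 - \<eta> (1 - q) [I = 2] / p)\<close>, where p is the probability of playing that arm.
  The importance weight 1/p cancels in expectation, so \<open>E q' = q - \<eta> q (1 - q) \<ge> (1 - \<eta>) q\<close>
  and \<open>E q\<^sub>t \<ge> (1 - \<eta>)^t / 2\<close>. As \<open>p \<ge> (1 - \<gamma>) q\<close>, the regret is at least
  \<open>(1 - \<gamma>)/2 \<Sum>t<T. (1 - \<eta>)^t \<ge> T / (4 (1 + \<eta> T))\<close>, which is at least \<open>T powr (2/3) / 8\<close>
  when \<open>\<eta> < T powr (-2/3)\<close>.\<close>

lemma geometric_sum_ge:
  fixes eta :: real
  assumes "0 < eta" and "eta \<le> 1"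
  shows "real T / (1 + real T * eta) \<le> (\<Sum>t<T. (1 - eta) ^ t)"
proof -
  have den: "0 < 1 + real T * eta" using assms by (simp add: add_pos_nonneg)
  have "(1 - eta) ^ T * (1 + real T * eta) \<le> (1 - eta) ^ T * (1 + eta) ^ T"
    using Bernoulli_inequality[of eta T] assms by (intro mult_left_mono) auto
  also have "\<dots> = (1 - eta\<^sup>2) ^ T"
    by (simp add: power_mult_distrib[symmetric] algebra_simps power2_eq_square)
  also have "\<dots> \<le> 1"
    using assms by (intro power_le_one) (auto simp: power2_eq_square mult_le_one)
  finally have "(1 - eta) ^ T \<le> 1 / (1 + real T * eta)"
    using den by (simp add: field_simps)
  then have "real T / (1 + real T * eta) \<le> (1 - (1 - eta) ^ T) / eta"
    using den assms by (simp add: field_simps)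
  also have "\<dots> = (\<Sum>t<T. (1 - eta) ^ t)"
    using geometric_sum[of "1 - eta" T] assms by (simp add: field_simps)
  finally show ?thesis .
qed

lemma two_thirds_power_le:
  fixes eta :: real
  assumes "1 \<le> T" and "0 \<le> eta" and "eta < real T powr (-2/3)"
  shows "real T powr (2/3) / 2 \<le> real T / (1 + real T * eta)"
proof -
  let ?a = "real T powr (2/3)"
  have "?a \<le> real T"
    using powr_mono[of "2/3" 1 "real T"] assms(1) by simp
  moreover have "real T * eta * ?a \<le> real T"
  proof -
    have "eta * ?a \<le> real T powr (-2/3) * ?a"
      using assms by (intro mult_right_mono) auto
    also have "\<dots> = 1"
      using assms(1) by (simp add: powr_add[symmetric])
    finally show ?thesis
      using mult_left_mono[of "eta * ?a" 1 "real T"] by (simp add: mult.assoc)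
  qed
  moreover have "0 < 1 + real T * eta" using assms by (simp add: add_pos_nonneg)
  ultimately show ?thesis by (simp add: field_simps)
qed

lemma wsu_pi_prefix_eq:
  assumes "\<forall>t\<in>{1..n}. I t = J t"
  shows "wsu_pi K eta gamma l I n = wsu_pi K eta gamma l J n"
  using assms
proof (induction n)
  case (Suc n)
  then have "wsu_pi K eta gamma l I n = wsu_pi K eta gamma l J n" and "I (Suc n) = J (Suc n)"
    by auto
  then show ?case by (simp add: Let_def)
qed simp

lemma wsu_mix_ge:
  assumes "0 \<le> p i" and "gamma \<le> 1"
  shows "gamma / real K \<le> wsu_mix K gamma p i"
  using assms unfolding wsu_mix_def by simp

locale wsu_bandit =
  fixes K :: nat and eta gamma :: real and l :: "nat \<Rightarrow> nat \<Rightarrow> real"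
  assumes valid: "wsu_valid K eta gamma"
    and arms_pos: "0 < K"
    and loss_range: "0 \<le> l t i" "l t i \<le> 1"
begin

abbreviation weight :: "(nat \<Rightarrow> nat) \<Rightarrow> nat \<Rightarrow> nat \<Rightarrow> real" where
  "weight I n \<equiv> wsu_pi K eta gamma l I n"

abbreviation play_prob :: "(nat \<Rightarrow> nat) \<Rightarrow> nat \<Rightarrow> nat \<Rightarrow> real" where
  "play_prob I n \<equiv> wsu_mix K gamma (weight I n)"

text \<open>Index shift: weight I n is the paper's \<open>\<pi>\<^sub>n\<^sub>+\<^sub>1\<close>, and loss_est I n the
  importance-weighted estimate of round n + 1.\<close>
definition loss_est :: "(nat \<Rightarrow> nat) \<Rightarrow> nat \<Rightarrow> nat \<Rightarrow> real" where
  "loss_est I n i = l (Suc n) i * (if I (Suc n) = i then 1 else 0) / play_prob I n i"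

lemma params: "0 < eta" "eta < 1/2" "0 < gamma" "gamma < 1/2" "eta * real K / gamma \<le> 1/2"
  using valid unfolding wsu_valid_def by auto

lemma weight_Suc:
  "weight I (Suc n) i =
     weight I n i * (1 - eta * (loss_est I n i - (\<Sum>j\<in>{1..K}. weight I n j * loss_est I n j)))"
  by (simp add: Let_def loss_est_def)

lemma weight_sum: "(\<Sum>i\<in>{1..K}. weight I n i) = 1"
proof (induction n)
  case 0
  show ?case using arms_pos by simp
next
  case (Suc n)
  define avg where "avg = (\<Sum>j\<in>{1..K}. weight I n j * loss_est I n j)"
  have "(\<Sum>i\<in>{1..K}. weight I (Suc n) i)
      = (\<Sum>i\<in>{1..K}. weight I n i - eta * (weight I n i * loss_est I n i) + eta * avg * weight I n i)"
    unfolding weight_Suc avg_def[symmetric] by (intro sum.cong) (auto simp: algebra_simps)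
  also have "\<dots> = (\<Sum>i\<in>{1..K}. weight I n i) - eta * avg + eta * avg * (\<Sum>i\<in>{1..K}. weight I n i)"
    by (simp add: sum.distrib sum_subtractf sum_distrib_left avg_def)
  finally show ?case using Suc.IH by simp
qed

lemma weight_nonneg: "i \<in> {1..K} \<Longrightarrow> 0 \<le> weight I n i"
proof (induction n arbitrary: i)
  case 0
  then show ?case by simp
next
  case (Suc n)
  have pp: "gamma / real K \<le> play_prob I n j" if "j \<in> {1..K}" for j
    using Suc.IH[OF that] params by (intro wsu_mix_ge) auto
  have K_gamma: "0 < gamma / real K" using params arms_pos by simp
  then have pp_pos: "0 < play_prob I n j" if "j \<in> {1..K}" for j
    using pp[OF that] by linarith
  have est_nonneg: "0 \<le> loss_est I n j" if "j \<in> {1..K}" for j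
    using pp_pos[OF that] loss_range unfolding loss_est_def by simp
  have "loss_est I n i \<le> 1 / play_prob I n i"
    using pp_pos[OF Suc.prems] loss_range[of "Suc n" i]
    unfolding loss_est_def by (intro divide_right_mono) auto
  also have "\<dots> \<le> 1 / (gamma / real K)"
    using divide_left_mono[OF pp[OF Suc.prems] zero_le_one mult_pos_pos[OF pp_pos[OF Suc.prems] K_gamma]] .
  finally have "loss_est I n i \<le> real K / gamma" by simp
  then have "eta * loss_est I n i \<le> eta * (real K / gamma)"
    using params by (intro mult_left_mono) auto
  also have "\<dots> \<le> 1/2" using params(5) by simp
  finally have "eta * loss_est I n i \<le> 1/2" .
  moreover have "0 \<le> eta * (\<Sum>j\<in>{1..K}. weight I n j * loss_est I n j)"
    using Suc.IH est_nonneg params by (intro mult_nonneg_nonneg sum_nonneg) auto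
  ultimately have "0 \<le> 1 - eta * (loss_est I n i - (\<Sum>j\<in>{1..K}. weight I n j * loss_est I n j))"
    by (simp add: right_diff_distrib)
  then show ?case unfolding weight_Suc using Suc.IH[OF Suc.prems] by simp
qed

lemma play_prob_ge: "i \<in> {1..K} \<Longrightarrow> gamma / real K \<le> play_prob I n i"
  using weight_nonneg params by (intro wsu_mix_ge) auto

lemma play_prob_pos: "i \<in> {1..K} \<Longrightarrow> 0 < play_prob I n i"
  using params arms_pos by (intro less_le_trans[OF _ play_prob_ge]) auto

lemma play_prob_sum: "(\<Sum>i\<in>{1..K}. play_prob I n i) = 1"
  using weight_sum[of I n] arms_pos
  by (simp add: wsu_mix_def sum.distrib sum_distrib_left[symmetric])

abbreviation histories :: "nat \<Rightarrow> (nat \<Rightarrow> nat) set" where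
  "histories n \<equiv> PiE {1..n} (\<lambda>_. {1..K})"

abbreviation hist_prob :: "nat \<Rightarrow> (nat \<Rightarrow> nat) \<Rightarrow> real" where
  "hist_prob n I \<equiv> wsu_hist_prob K eta gamma l n I"

definition expect :: "nat \<Rightarrow> ((nat \<Rightarrow> nat) \<Rightarrow> real) \<Rightarrow> real" where
  "expect n f = (\<Sum>I\<in>histories n. hist_prob n I * f I)"

lemma hist_prob_prefix_eq:
  assumes "\<forall>t\<in>{1..n}. I t = J t"
  shows "hist_prob n I = hist_prob n J"
  unfolding wsu_hist_prob_def
proof (intro prod.cong refl)
  fix t assume "t \<in> {1..n}"
  moreover have "weight I (t - 1) = weight J (t - 1)"
    using assms calculation by (intro wsu_pi_prefix_eq) auto
  ultimately show "play_prob I (t - 1) (I t) = play_prob J (t - 1) (J t)"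
    using assms by simp
qed

lemma hist_prob_Suc: "hist_prob (Suc n) I = play_prob I n (I (Suc n)) * hist_prob n I"
proof -
  have "{1..Suc n} = insert (Suc n) {1..n}" by auto
  then show ?thesis unfolding wsu_hist_prob_def by simp
qed

lemma hist_prob_nonneg: "I \<in> histories n \<Longrightarrow> 0 \<le> hist_prob n I"
  unfolding wsu_hist_prob_def
  by (intro prod_nonneg ballI less_imp_le[OF play_prob_pos]) (auto simp: PiE_def)

lemma expect_mono:
  "(\<And>I. I \<in> histories n \<Longrightarrow> f I \<le> g I) \<Longrightarrow> expect n f \<le> expect n g"
  unfolding expect_def by (intro sum_mono mult_left_mono hist_prob_nonneg) auto

lemma expect_scale: "expect n (\<lambda>I. c * f I) = c * expect n f"
  unfolding expect_def by (simp add: sum_distrib_left mult_ac)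

lemma expect_sum: "expect n (\<lambda>I. \<Sum>t\<in>A. f t I) = (\<Sum>t\<in>A. expect n (f t))"
  unfolding expect_def by (simp add: sum_distrib_left sum.swap[of _ A])

lemma expect_Suc:
  "expect (Suc n) f = expect n (\<lambda>I. \<Sum>i\<in>{1..K}. play_prob I n i * f (I(Suc n := i)))"
proof -
  have fresh: "Suc n \<notin> {1..n}" by simp
  have extend_dom: "{1..Suc n} = insert (Suc n) {1..n}" by auto
  have extend: "\<forall>t\<in>{1..n}. (I(Suc n := i)) t = I t" for I :: "nat \<Rightarrow> nat" and i by simp
  have "expect (Suc n) f
      = (\<Sum>(i, I)\<in>{1..K} \<times> histories n. hist_prob (Suc n) (I(Suc n := i)) * f (I(Suc n := i)))"
    unfolding expect_def extend_dom PiE_insert_eq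
    by (subst sum.reindex) (use inj_combinator[OF fresh] in \<open>auto simp: case_prod_unfold\<close>)
  also have "\<dots> = (\<Sum>(i, I)\<in>{1..K} \<times> histories n. play_prob I n i * hist_prob n I * f (I(Suc n := i)))"
    by (intro sum.cong refl)
      (auto simp: hist_prob_Suc hist_prob_prefix_eq[OF extend] wsu_pi_prefix_eq[OF extend])
  also have "\<dots> = expect n (\<lambda>I. \<Sum>i\<in>{1..K}. play_prob I n i * f (I(Suc n := i)))"
    unfolding expect_def sum.cartesian_product[symmetric]
    by (subst sum.swap) (simp add: sum_distrib_left mult_ac)
  finally show ?thesis .
qed

lemma expect_tower:
  assumes "m \<le> n" and prefix: "\<And>I J. \<forall>t\<in>{1..m}. I t = J t \<Longrightarrow> f I = f J"
  shows "expect n f = expect m f"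
  using assms(1)
proof (induction n)
  case (Suc n)
  show ?case
  proof (cases "m = Suc n")
    case False
    then have "m \<le> n" using Suc.prems by simp
    have "f (I(Suc n := i)) = f I" for I i
      by (intro prefix) (use \<open>m \<le> n\<close> in auto)
    then have "expect (Suc n) f = expect n (\<lambda>I. \<Sum>i\<in>{1..K}. play_prob I n i * f I)"
      unfolding expect_Suc by simp
    also have "\<dots> = expect n f"
      unfolding sum_distrib_right[symmetric] play_prob_sum by simp
    finally show ?thesis using Suc.IH[OF \<open>m \<le> n\<close>] by simp
  qed simp
qed simp

end

abbreviation second_arm_loss :: "nat \<Rightarrow> nat \<Rightarrow> real" where
  "second_arm_loss \<equiv> \<lambda>t i. if i = 1 then 0 else 1"

locale wsu_two_arms =
  fixes eta gamma :: real
  assumes valid_two: "wsu_valid 2 eta gamma"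

sublocale wsu_two_arms \<subseteq> wsu_bandit 2 eta gamma second_arm_loss
  using valid_two by unfold_locales auto

context wsu_two_arms
begin

lemma two_arms: "{1..2::nat} = {1, 2}"
  by auto

lemma sum_two_arms: "(\<Sum>i\<in>{1..2::nat}. f i) = f 1 + f 2"
  unfolding two_arms by simp

lemma weight_first_arm: "weight I n 1 = 1 - weight I n 2"
  using weight_sum[of I n] unfolding sum_two_arms by simp

lemma play_prob_first_arm: "play_prob I n 1 = 1 - play_prob I n 2"
  using play_prob_sum[of I n] unfolding sum_two_arms by simp

lemma weight_second_arm_Suc:
  "weight I (Suc n) 2 =
     weight I n 2 * (1 - eta * (1 - weight I n 2) * (if I (Suc n) = 2 then 1 / play_prob I n 2 else 0))"
  unfolding weight_Suc[of I n 2] sum_two_arms weight_first_arm loss_est_def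
  by (simp add: algebra_simps)

lemma second_arm_drift:
  "(1 - eta) * weight I n 2 \<le> (\<Sum>i\<in>{1..2}. play_prob I n i * weight (I(Suc n := i)) (Suc n) 2)"
proof -
  let ?q = "weight I n 2" and ?m = "play_prob I n 2"
  have "\<forall>t\<in>{1..n}. (I(Suc n := i)) t = I t" for i by simp
  then have past: "weight (I(Suc n := i)) n = weight I n" for i by (rule wsu_pi_prefix_eq)
  have "?m > 0" by (rule play_prob_pos) simp
  have "(\<Sum>i\<in>{1..2}. play_prob I n i * weight (I(Suc n := i)) (Suc n) 2)
      = (1 - ?m) * ?q + ?m * (?q * (1 - eta * (1 - ?q) * (1 / ?m)))"
    unfolding sum_two_arms weight_second_arm_Suc past play_prob_first_arm by simp
  also have "\<dots> = (1 - eta) * ?q + eta * ?q\<^sup>2"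
    using \<open>?m > 0\<close> by (simp add: field_simps power2_eq_square)
  finally show ?thesis using params by simp
qed

lemma expect_second_arm_weight: "(1 - eta) ^ n / 2 \<le> expect n (\<lambda>I. weight I n 2)"
proof (induction n)
  case 0
  have "histories 0 = {\<lambda>_. undefined}" by simp
  then show ?case unfolding expect_def wsu_hist_prob_def by simp
next
  case (Suc n)
  have "(1 - eta) ^ Suc n / 2 \<le> (1 - eta) * expect n (\<lambda>I. weight I n 2)"
    using Suc.IH params by (simp add: mult_left_mono)
  also have "\<dots> = expect n (\<lambda>I. (1 - eta) * weight I n 2)"
    by (rule expect_scale[symmetric])
  also have "\<dots> \<le> expect (Suc n) (\<lambda>I. weight I (Suc n) 2)"
    unfolding expect_Suc by (intro expect_mono second_arm_drift)
  finally show ?case .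
qed

lemma expect_second_arm_play:
  assumes "t \<le> T"
  shows "(1 - gamma) * ((1 - eta) ^ t / 2) \<le> expect T (\<lambda>I. play_prob I t 2)"
proof -
  have "expect T (\<lambda>I. weight I t 2) = expect t (\<lambda>I. weight I t 2)"
    using assms wsu_pi_prefix_eq by (intro expect_tower) metis+
  moreover have "(1 - gamma) * ((1 - eta) ^ t / 2) \<le> (1 - gamma) * expect t (\<lambda>I. weight I t 2)"
    using expect_second_arm_weight[of t] params by (intro mult_left_mono) auto
  ultimately have "(1 - gamma) * ((1 - eta) ^ t / 2) \<le> (1 - gamma) * expect T (\<lambda>I. weight I t 2)"
    by simp
  also have "\<dots> = expect T (\<lambda>I. (1 - gamma) * weight I t 2)"
    by (rule expect_scale[symmetric])
  also have "\<dots> \<le> expect T (\<lambda>I. play_prob I t 2)"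
    using params by (intro expect_mono) (simp add: wsu_mix_def)
  finally show ?thesis .
qed

lemma expected_regret_second_arm:
  "wsu_expected_regret 2 T eta gamma second_arm_loss = (\<Sum>t<T. expect T (\<lambda>I. play_prob I t 2))"
proof -
  have "(\<lambda>i. \<Sum>t\<in>{1..T}. second_arm_loss t i) ` {1..2} = {0, real T}"
    unfolding two_arms by simp
  then have best_arm: "Min ((\<lambda>i. \<Sum>t\<in>{1..T}. second_arm_loss t i) ` {1..2}) = 0" by simp
  have "wsu_expected_regret 2 T eta gamma second_arm_loss
      = (\<Sum>I\<in>histories T. hist_prob T I * (\<Sum>t\<in>{1..T}. play_prob I (t - 1) 2))"
    unfolding wsu_expected_regret_def best_arm sum_two_arms by simp
  also have "\<dots> = expect T (\<lambda>I. \<Sum>t<T. play_prob I t 2)"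
    unfolding expect_def by (simp add: sum.atLeast1_atMost_eq)
  also have "\<dots> = (\<Sum>t<T. expect T (\<lambda>I. play_prob I t 2))"
    by (rule expect_sum)
  finally show ?thesis .
qed

end

theorem mainTheorem2:
  fixes T :: nat and eta gamma :: real
  assumes "T \<ge> 1"
    and "wsu_valid 2 eta gamma"
    and "eta < real T powr (-2/3)"
  shows "wsu_expected_regret 2 T eta gamma (\<lambda>t i. if i = 1 then 0 else 1)
           \<ge> (1/200) * real T powr (2/3)"
proof -
  interpret wsu_two_arms eta gamma
    using assms(2) by unfold_locales
  have "(1/200) * real T powr (2/3) \<le> (1 - gamma) / 4 * real T powr (2/3)"
    using params by (intro mult_right_mono) auto
  also have "\<dots> = (1 - gamma) / 2 * (real T powr (2/3) / 2)"
    by simp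
  also have "\<dots> \<le> (1 - gamma) / 2 * (real T / (1 + real T * eta))"
    using assms params by (intro mult_left_mono two_thirds_power_le) auto
  also have "\<dots> \<le> (1 - gamma) / 2 * (\<Sum>t<T. (1 - eta) ^ t)"
    using params by (intro mult_left_mono geometric_sum_ge) auto
  also have "\<dots> = (\<Sum>t<T. (1 - gamma) * ((1 - eta) ^ t / 2))"
    by (simp add: sum_distrib_left)
  also have "\<dots> \<le> (\<Sum>t<T. expect T (\<lambda>I. play_prob I t 2))"
    by (intro sum_mono expect_second_arm_play) simp
  also have "\<dots> = wsu_expected_regret 2 T eta gamma second_arm_loss"
    by (rule expected_regret_second_arm[symmetric])
  finally show ?thesis .
qed

end
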